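(* Let $T\in\mathcal{B}(\mathcal{H})$ be power bounded and let $L$ be a Banach limit such that $A_{T,L}\neq 0$. Then $\|A_{T,L}\|\geq 1$. In particular, if $T$ is a contraction with $A_T\neq 0$, then $\|A_T\|=1$.
   Context: $\mathcal{H}$ is a complex Hilbert space and $\mathcal{B}(\mathcal{H})$ the algebra of bounded linear operators on it. An operator $T$ is power bounded if $\sup_{n\in\mathbb{N}}\|T^n\|<\infty$. A Banach limit is a linear functional $L$ on $\ell^\infty(\mathbb{N})$, written $\{x_n\}\mapsto \operatorname{L-lim}_{n\to\infty}x_n$, such that $\|L\|=1$, $\operatorname{L-lim}x_n=\lim x_n$ for convergent sequences, $\operatorname{L-lim}x_n\ge 0$ whenever all $x_n\ge0$, and $\operatorname{L-lim}x_n=\operatorname{L-lim}x_{n+1}$. For a power bounded $T$ and a Banach limit $L$, the $L$-asymptotic limit $A_{T,L}$ is the unique positive operator with $\langle A_{T,L}x,y\rangle=\operatorname{L-lim}_{n\to\infty}\langle T^{*n}T^nx,y\rangle$ for all $x,y\in\mathcal{H}$. For a contraction $T$ ($\|T\|\le1$), the sequence $T^{*n}T^n$ converges in the strong operator topology to a positive operator $A_T$, the asymptotic limit of $T$ (it equals $A_{T,L}$ for every Banach limit $L$). *)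

theory Defs
  imports "HOL-Analysis.Analysis"
begin

text \<open>HOL-Analysis only provides real inner product spaces.\<close>

class complex_inner = real_inner +
  fixes scaleC :: "complex \<Rightarrow> 'a \<Rightarrow> 'a"
    and cinner :: "'a \<Rightarrow> 'a \<Rightarrow> complex"
  assumes scaleC_of_real: "scaleC (complex_of_real r) x = scaleR r x"
    and scaleC_add_right: "scaleC a (x + y) = scaleC a x + scaleC a y"
    and scaleC_add_left: "scaleC (a + b) x = scaleC a x + scaleC b x"
    and scaleC_scaleC: "scaleC a (scaleC b x) = scaleC (a * b) x"
    and scaleC_one: "scaleC 1 x = x"
    and cinner_commute: "cinner x y = cnj (cinner y x)"
    and cinner_add_left: "cinner (x + y) z = cinner x z + cinner y z"
    and cinner_scaleC_left: "cinner (scaleC a x) y = a * cinner x y"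
    and inner_cinner: "inner x y = Re (cinner x y)"

class chilbert = complex_inner + complete_space

text \<open>Elements of B(H): bounded complex-linear maps H \<Rightarrow> H. The operator norm is onorm.\<close>
definition bounded_clinear :: "('a::complex_inner \<Rightarrow> 'a) \<Rightarrow> bool" where
  "bounded_clinear T \<longleftrightarrow> bounded_linear T \<and> (\<forall>c x. T (scaleC c x) = scaleC c (T x))"

definition cadjoint :: "('a::complex_inner \<Rightarrow> 'a) \<Rightarrow> ('a \<Rightarrow> 'a)" where
  "cadjoint T = (THE S. \<forall>x y. cinner (T x) y = cinner x (S y))"

definition positive_op :: "('a::complex_inner \<Rightarrow> 'a) \<Rightarrow> bool" where
  "positive_op A \<longleftrightarrow> (\<forall>x. Im (cinner (A x) x) = 0 \<and> Re (cinner (A x) x) \<ge> 0)"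

definition power_bounded :: "('a::complex_inner \<Rightarrow> 'a) \<Rightarrow> bool" where
  "power_bounded T \<longleftrightarrow> bounded_clinear T \<and> (\<exists>M. \<forall>n. onorm (T ^^ n) \<le> M)"

definition contraction :: "('a::complex_inner \<Rightarrow> 'a) \<Rightarrow> bool" where
  "contraction T \<longleftrightarrow> bounded_clinear T \<and> onorm T \<le> 1"

text \<open>A Banach limit is a functional on l-infinity(N) (complex bounded sequences). It is
modelled as a function on all sequences nat \<Rightarrow> complex; all conditions only concern
bounded sequences, the values on unbounded sequences are irrelevant.
The condition norm L = 1 is stated as norm (L x) \<le> sup_n norm (x n); the reverse
inequality is implied by L preserving limits of convergent (e.g. constant) sequences.\<close>
definition banach_limit :: "((nat \<Rightarrow> complex) \<Rightarrow> complex) \<Rightarrow> bool" where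
  "banach_limit L \<longleftrightarrow>
     (\<forall>x y. bounded (range x) \<longrightarrow> bounded (range y) \<longrightarrow> L (\<lambda>n. x n + y n) = L x + L y) \<and>
     (\<forall>c x. bounded (range x) \<longrightarrow> L (\<lambda>n. c * x n) = c * L x) \<and>
     (\<forall>x. bounded (range x) \<longrightarrow> cmod (L x) \<le> (SUP n. cmod (x n))) \<and>
     (\<forall>x. convergent x \<longrightarrow> L x = lim x) \<and>
     (\<forall>x. bounded (range x) \<longrightarrow> (\<forall>n. Im (x n) = 0 \<and> Re (x n) \<ge> 0) \<longrightarrow>
            Im (L x) = 0 \<and> Re (L x) \<ge> 0) \<and>
     (\<forall>x. bounded (range x) \<longrightarrow> L x = L (\<lambda>n. x (Suc n)))"

definition asym_limit_L :: "('a::complex_inner \<Rightarrow> 'a) \<Rightarrow> ((nat \<Rightarrow> complex) \<Rightarrow> complex) \<Rightarrow> ('a \<Rightarrow> 'a)" where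
  "asym_limit_L T L = (THE A. bounded_clinear A \<and> positive_op A \<and>
      (\<forall>x y. cinner (A x) y = L (\<lambda>n. cinner ((cadjoint T ^^ n) ((T ^^ n) x)) y)))"

definition asym_limit :: "('a::complex_inner \<Rightarrow> 'a) \<Rightarrow> ('a \<Rightarrow> 'a)" where
  "asym_limit T = (THE A. \<forall>x. (\<lambda>n. (cadjoint T ^^ n) ((T ^^ n) x)) \<longlonglongrightarrow> A x)"

end

theory Submission
  imports Defs
begin

text \<open>
  Let A be the L-asymptotic limit. Shift invariance of the Banach limit gives
  cinner (A (T x)) (T y) = cinner (A x) y, hence
  cinner (A x) x = cinner (A (T^k x)) (T^k x) \<le> norm A * norm (T^k x)^2 for every k.
  The Banach limit in k of the right-hand side is norm A * cinner (A x) x, so norm A \<ge> 1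
  as soon as cinner (A x) x > 0 for some x, which polarization provides for a nonzero
  positive A. For a contraction the same argument runs with ordinary limits. There
  T*^n T^n converges strongly: for m \<le> n the difference D = T*^m T^m - T*^n T^n is a
  positive operator of norm at most 2, so norm (D x)^2 \<le> 2 (norm (T^m x)^2 - norm (T^n x)^2),
  and the right-hand side is small because norm (T^n x) decreases. The limit has norm at
  most 1. Adjoints and the L-asymptotic limit are obtained from the Riesz representation
  theorem, proved by minimising norm x^2 / 2 - f x over the Hilbert space.
\<close>

section \<open>Complex inner products\<close>

lemma cinner_add_right: "cinner x (y + z) = cinner x y + cinner x (z::'a::complex_inner)"
  by (metis cinner_add_left cinner_commute complex_cnj_add)

lemma cinner_scaleC_right: "cinner x (scaleC a y) = cnj a * cinner x (y::'a::complex_inner)"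
  by (metis cinner_commute cinner_scaleC_left complex_cnj_cnj complex_cnj_mult)

lemma cinner_self: "cinner x x = complex_of_real ((norm (x::'a::complex_inner))\<^sup>2)"
proof (rule complex_eqI)
  show "Im (cinner x x) = Im (complex_of_real ((norm x)\<^sup>2))"
    using cinner_commute[of x x] by (metis Im_complex_of_real Reals_cnj_iff complex_is_Real_iff)
qed (simp add: inner_cinner[symmetric] power2_norm_eq_inner)

lemma norm_scaleC: "norm (scaleC c x) = cmod c * norm (x::'a::complex_inner)"
proof -
  have "complex_of_real ((norm (scaleC c x))\<^sup>2) = cinner (scaleC c x) (scaleC c x)"
    by (simp add: cinner_self)
  also have "\<dots> = c * cnj c * cinner x x"
    by (simp add: cinner_scaleC_left cinner_scaleC_right)
  also have "\<dots> = complex_of_real ((cmod c * norm x)\<^sup>2)"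
    by (simp add: cinner_self complex_norm_square[symmetric] power_mult_distrib)
  finally show ?thesis
    by (simp add: power2_eq_iff_nonneg del: of_real_power)
qed

lemma cinner_cauchy_schwarz: "cmod (cinner x y) \<le> norm x * norm (y::'a::complex_inner)"
proof (cases "cinner x y = 0")
  case False
  define c where "c = cnj (cinner x y) / cmod (cinner x y)"
  \<comment> \<open>rotating x by the unimodular c makes the inner product real\<close>
  have "cinner (scaleC c x) y = complex_of_real (cmod (cinner x y))"
    using False by (simp add: c_def cinner_scaleC_left complex_norm_square[symmetric]
        power2_eq_square field_simps)
  then have "cmod (cinner x y) = inner (scaleC c x) y"
    by (metis Re_complex_of_real inner_cinner)
  also have "\<dots> \<le> norm (scaleC c x) * norm y" by (rule norm_cauchy_schwarz)
  also have "\<dots> = norm x * norm y" using False by (simp add: norm_scaleC c_def norm_divide)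
  finally show ?thesis .
qed simp

lemma cinner_left_ext: "(\<And>y. cinner x y = cinner x' (y::'a::complex_inner)) \<Longrightarrow> x = x'"
  by (metis all_zero_iff inner_cinner inner_diff_left right_minus_eq)

lemma norm_le_if_cinner_le:
  fixes u :: "'a::complex_inner"
  assumes "0 \<le> K" and "\<And>y. cmod (cinner u y) \<le> K * norm y"
  shows "norm u \<le> K"
proof (cases "u = 0")
  case False
  have "norm u * norm u = cmod (cinner u u)"
    by (simp only: cinner_self norm_of_real) (simp add: power2_eq_square)
  also have "\<dots> \<le> K * norm u" by (rule assms(2))
  finally show ?thesis using False by simp
qed (use assms(1) in simp)

lemma Cauchy_if_dist_sq_le_add:
  fixes X :: "nat \<Rightarrow> 'a::metric_space"
  assumes e: "e \<longlonglongrightarrow> 0" and dist: "\<And>m n. (dist (X m) (X n))\<^sup>2 \<le> e m + e n"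
  shows "Cauchy X"
proof (rule metric_CauchyI)
  fix r :: real assume "r > 0"
  then obtain N where N: "\<And>n. n \<ge> N \<Longrightarrow> \<bar>e n\<bar> < r\<^sup>2 / 2"
    using LIMSEQ_D[OF e, of "r\<^sup>2 / 2"] by auto
  have "dist (X m) (X n) < r" if "m \<ge> N" "n \<ge> N" for m n
  proof -
    have "(dist (X m) (X n))\<^sup>2 < r\<^sup>2"
      using dist[of m n] N[OF that(1)] N[OF that(2)] by linarith
    then show ?thesis using \<open>r > 0\<close> by (simp add: power_less_imp_less_base less_imp_le)
  qed
  then show "\<exists>N. \<forall>m\<ge>N. \<forall>n\<ge>N. dist (X m) (X n) < r" by blast
qed

section \<open>The Riesz representation theorem\<close>

lemma minimizer_represents_linear_functional:
  fixes f :: "'a::real_inner \<Rightarrow> real"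
  assumes f: "linear f" and min: "\<And>x. (norm y)\<^sup>2 / 2 - f y \<le> (norm x)\<^sup>2 / 2 - f x"
  shows "f h = inner y h"
proof (cases "h = 0")
  case False
  define d where "d = inner y h - f h"
  define N where "N = (norm h)\<^sup>2"
  have "N > 0" using False by (simp add: N_def)
  have expand: "(norm (y + t *\<^sub>R h))\<^sup>2 / 2 - f (y + t *\<^sub>R h)
      = (norm y)\<^sup>2 / 2 - f y + t * d + t\<^sup>2 * N / 2" for t
    unfolding d_def N_def power2_norm_eq_inner
    by (simp add: linear_add[OF f] linear_scale[OF f] inner_simps inner_commute algebra_simps
        power2_eq_square)
  have "0 \<le> (- d / N) * d + (- d / N)\<^sup>2 * N / 2"
    using min[of "y + (- d / N) *\<^sub>R h"] unfolding expand by linarith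
  also have "\<dots> = - d\<^sup>2 / (2 * N)"
    using \<open>N > 0\<close> by (simp add: field_simps power2_eq_square)
  finally have "d\<^sup>2 \<le> 0"
    using \<open>N > 0\<close> by (simp add: divide_le_0_iff)
  then have "d = 0" by simp
  then show ?thesis by (simp add: d_def)
qed (simp add: linear_0[OF f])

lemma linear_functional_minimizer_exists:
  fixes f :: "'a::{real_inner,complete_space} \<Rightarrow> real"
  assumes f: "bounded_linear f"
  shows "\<exists>y. \<forall>x. (norm y)\<^sup>2 / 2 - f y \<le> (norm x)\<^sup>2 / 2 - f x"
proof -
  interpret f: bounded_linear f by fact
  obtain K where K: "\<And>x. norm (f x) \<le> norm x * K" using f.bounded by blast
  define J where "J x = (norm x)\<^sup>2 / 2 - f x" for x
  have "- K\<^sup>2 / 2 \<le> J x" for x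
  proof -
    have "f x \<le> norm x * K" using K[of x] by simp
    moreover have "0 \<le> (norm x - K)\<^sup>2" by simp
    ultimately show ?thesis unfolding J_def by (simp add: power2_eq_square algebra_simps)
  qed
  then have bdd: "bdd_below (range J)" by (meson bdd_belowI2)
  define m where "m = Inf (range J)"
  have m_le: "m \<le> J x" for x unfolding m_def using bdd by (simp add: cInf_lower)
  have "\<exists>x. J x < m + inverse (real (Suc n))" for n
  proof -
    have "Inf (range J) < m + inverse (real (Suc n))" by (simp add: m_def)
    then show ?thesis using bdd by (simp add: cInf_less_iff)
  qed
  then obtain X where X: "\<And>n. J (X n) < m + inverse (real (Suc n))" by metis
  define e where "e n = J (X n) - m" for n
  have e: "e \<longlonglongrightarrow> 0"
  proof (rule tendsto_sandwich[of "\<lambda>_. 0" _ _ "\<lambda>n. inverse (real (Suc n))"])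
    show "\<forall>\<^sub>F n in sequentially. 0 \<le> e n" using m_le by (simp add: e_def)
    show "\<forall>\<^sub>F n in sequentially. e n \<le> inverse (real (Suc n))"
      using X by (simp add: e_def less_imp_le algebra_simps)
  qed (simp_all only: tendsto_const LIMSEQ_inverse_real_of_nat)
  \<comment> \<open>the parallelogram law, in terms of J\<close>
  have midpoint: "(norm (a - b))\<^sup>2 = 4 * J a + 4 * J b - 8 * J ((1/2) *\<^sub>R (a + b))" for a b
    unfolding J_def
    by (simp add: power2_norm_eq_inner inner_simps f.add f.scaleR f.diff inner_commute
        algebra_simps)
  have "(dist (X i) (X j))\<^sup>2 \<le> 4 * e i + 4 * e j" for i j
    using midpoint[of "X i" "X j"] m_le[of "(1/2) *\<^sub>R (X i + X j)"]
    by (simp add: e_def dist_norm algebra_simps)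
  then have "Cauchy X" by (rule Cauchy_if_dist_sq_le_add[OF tendsto_mult_right_zero[OF e]])
  then obtain y where y: "X \<longlonglongrightarrow> y" using Cauchy_convergent_iff convergent_def by blast
  have "(\<lambda>n. J (X n)) \<longlonglongrightarrow> J y"
    unfolding J_def by (auto intro!: tendsto_intros f.tendsto y)
  moreover have "(\<lambda>n. J (X n)) \<longlonglongrightarrow> m"
    using tendsto_add[OF e tendsto_const[of m]] by (simp add: e_def)
  ultimately have "J y = m" using LIMSEQ_unique by blast
  then show ?thesis using m_le unfolding J_def by metis
qed

lemma riesz_representation_real:
  fixes f :: "'a::{real_inner,complete_space} \<Rightarrow> real"
  assumes "bounded_linear f"
  shows "\<exists>z. \<forall>x. f x = inner z x"
  using linear_functional_minimizer_exists[OF assms] minimizer_represents_linear_functional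
    bounded_linear.linear[OF assms] by metis

section \<open>Bounded operators and adjoints\<close>

lemma bounded_clinear_imp_bounded_linear: "bounded_clinear T \<Longrightarrow> bounded_linear T"
  by (simp add: bounded_clinear_def)

lemma bounded_clinear_scaleC: "bounded_clinear T \<Longrightarrow> T (scaleC c x) = scaleC c (T x)"
  by (simp add: bounded_clinear_def)

lemma bounded_clinear_funpow: "bounded_clinear T \<Longrightarrow> bounded_clinear (T ^^ n)"
  by (induction n)
    (auto simp: bounded_clinear_def bounded_linear_ident comp_def intro: bounded_linear_compose)

lemma bounded_sesquilinear_form_representation:
  fixes B :: "'a::chilbert \<Rightarrow> 'a \<Rightarrow> complex"
  assumes add_left: "\<And>x1 x2 y. B (x1 + x2) y = B x1 y + B x2 y"
    and scaleC_left: "\<And>c x y. B (scaleC c x) y = c * B x y"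
    and add_right: "\<And>x y1 y2. B x (y1 + y2) = B x y1 + B x y2"
    and scaleC_right: "\<And>c x y. B x (scaleC c y) = cnj c * B x y"
    and bound: "\<And>x y. cmod (B x y) \<le> K * norm x * norm y" and "0 \<le> K"
  shows "\<exists>A. bounded_clinear A \<and> (\<forall>x y. cinner (A x) y = B x y)"
proof -
  have "\<exists>z. \<forall>y. Re (B x y) = inner z y" for x
  proof (rule riesz_representation_real)
    show "bounded_linear (\<lambda>y. Re (B x y))"
    proof (rule bounded_linear_intro[where K = "K * norm x"])
      show "Re (B x (r *\<^sub>R y)) = r *\<^sub>R Re (B x y)" for r y
        using scaleC_right[where c = "complex_of_real r"] by (simp add: scaleC_of_real)
      show "norm (Re (B x y)) \<le> norm y * (K * norm x)" for y
        using abs_Re_le_cmod[of "B x y"] bound[of x y] by (simp add: algebra_simps)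
    qed (simp add: add_right)
  qed
  then obtain A where A: "\<And>x y. Re (B x y) = inner (A x) y" by metis
  \<comment> \<open>the imaginary part of cinner (A x) y is the real part of cinner (A x) (scaleC \<i> y)\<close>
  have AB: "cinner (A x) y = B x y" for x y
  proof (rule complex_eqI)
    have "Im (cinner (A x) y) = Re (cinner (A x) (scaleC \<i> y))" by (simp add: cinner_scaleC_right)
    also have "\<dots> = Im (B x y)" by (simp add: A[symmetric] inner_cinner[symmetric] scaleC_right)
    finally show "Im (cinner (A x) y) = Im (B x y)" .
  qed (simp add: A inner_cinner)
  have add: "A (u + v) = A u + A v" for u v
    by (rule cinner_left_ext) (simp add: AB add_left cinner_add_left)
  have scale: "A (scaleC c u) = scaleC c (A u)" for c u
    by (rule cinner_left_ext) (simp add: AB scaleC_left cinner_scaleC_left)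
  have "norm (A x) \<le> K * norm x" for x
    by (rule norm_le_if_cinner_le) (use bound \<open>0 \<le> K\<close> in \<open>simp_all add: AB mult.assoc\<close>)
  then have "bounded_linear A"
    using scale[where c = "complex_of_real r" for r]
    by (intro bounded_linear_intro[of _ K]) (simp_all add: add scaleC_of_real mult.commute)
  then show ?thesis using AB scale by (auto simp: bounded_clinear_def)
qed

lemma cadjoint_eqI:
  fixes T :: "'a::complex_inner \<Rightarrow> 'a"
  assumes "\<And>x y. cinner (T x) y = cinner x (S y)"
  shows "cadjoint T = S"
  unfolding cadjoint_def
proof (rule the_equality)
  show "\<forall>x y. cinner (T x) y = cinner x (S y)" using assms by blast
  fix S' assume S': "\<forall>x y. cinner (T x) y = cinner x (S' y)"
  show "S' = S"
  proof
    fix y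
    show "S' y = S y" by (rule cinner_left_ext) (metis S' assms cinner_commute)
  qed
qed

lemma adjoint_exists:
  fixes T :: "'a::chilbert \<Rightarrow> 'a"
  assumes T: "bounded_clinear T"
  shows "\<exists>S. bounded_clinear S \<and> (\<forall>x y. cinner (T x) y = cinner x (S y))"
proof -
  have lin: "bounded_linear T" by (rule bounded_clinear_imp_bounded_linear[OF T])
  have "\<exists>S. bounded_clinear S \<and> (\<forall>y x. cinner (S y) x = (\<lambda>y x. cinner y (T x)) y x)"
  proof (rule bounded_sesquilinear_form_representation)
    show "cmod (cinner y (T x)) \<le> onorm T * norm y * norm x" for y x
    proof -
      have "cmod (cinner y (T x)) \<le> norm y * norm (T x)" by (rule cinner_cauchy_schwarz)
      also have "\<dots> \<le> norm y * (onorm T * norm x)" by (rule mult_left_mono[OF onorm[OF lin]]) simp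
      finally show ?thesis by (simp add: algebra_simps)
    qed
  qed (simp_all add: onorm_pos_le[OF lin] cinner_add_left cinner_scaleC_left cinner_add_right
      cinner_scaleC_right linear_add[OF bounded_linear.linear[OF lin]] bounded_clinear_scaleC[OF T])
  then show ?thesis by (metis cinner_commute)
qed

lemma
  fixes T :: "'a::chilbert \<Rightarrow> 'a"
  assumes "bounded_clinear T"
  shows bounded_clinear_cadjoint: "bounded_clinear (cadjoint T)"
    and cinner_cadjoint: "cinner (T x) y = cinner x (cadjoint T y)"
proof -
  obtain S where "bounded_clinear S" and S: "\<And>x y. cinner (T x) y = cinner x (S y)"
    using adjoint_exists[OF assms] by blast
  moreover have "cadjoint T = S" using S by (rule cadjoint_eqI)
  ultimately show "bounded_clinear (cadjoint T)" "cinner (T x) y = cinner x (cadjoint T y)"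
    by simp_all
qed

lemma cinner_cadjoint_funpow:
  fixes T :: "'a::chilbert \<Rightarrow> 'a"
  assumes "bounded_clinear T"
  shows "cinner ((cadjoint T ^^ n) w) y = cinner w ((T ^^ n) y)"
proof (induction n arbitrary: y)
  case (Suc n)
  have "cinner ((cadjoint T ^^ Suc n) w) y = cnj (cinner y (cadjoint T ((cadjoint T ^^ n) w)))"
    by (simp flip: cinner_commute)
  also have "\<dots> = cinner ((cadjoint T ^^ n) w) (T y)"
    by (simp add: cinner_cadjoint[OF assms, symmetric] flip: cinner_commute)
  also have "\<dots> = cinner w ((T ^^ Suc n) y)"
    by (simp add: Suc funpow_Suc_right del: funpow.simps)
  finally show ?case .
qed simp

lemma bounded_clinear_eq_zero_if_cinner_self_zero:
  fixes A :: "'a::complex_inner \<Rightarrow> 'a"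
  assumes A: "bounded_clinear A" and zero: "\<And>x. cinner (A x) x = 0"
  shows "A = (\<lambda>_. 0)"
proof
  fix x
  have add: "A (u + v) = A u + A v" for u v
    using bounded_clinear_imp_bounded_linear[OF A] by (simp add: linear_simps)
  \<comment> \<open>polarization\<close>
  have sum: "cinner (A u) v + cinner (A v) u = 0" for u v
    using zero[of "u + v"] zero[of u] zero[of v]
    by (simp add: add cinner_add_left cinner_add_right add.commute)
  have "- \<i> * cinner (A u) v + \<i> * cinner (A v) u = 0" for u v
    using sum[of u "scaleC \<i> v"]
    by (simp add: cinner_scaleC_right cinner_scaleC_left bounded_clinear_scaleC[OF A])
  then have "cinner (A u) v = cinner (A v) u" for u v
    by (simp add: algebra_simps)
  then have "cinner (A x) (A x) = 0" using sum[of x "A x"] by simp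
  then show "A x = 0" by (simp add: cinner_self)
qed

lemma positive_op_imp_cinner_self_pos:
  fixes A :: "'a::complex_inner \<Rightarrow> 'a"
  assumes "bounded_clinear A" and "positive_op A" and "A \<noteq> (\<lambda>_. 0)"
  obtains x where "Re (cinner (A x) x) > 0"
proof -
  obtain x where x: "cinner (A x) x \<noteq> 0"
    using assms bounded_clinear_eq_zero_if_cinner_self_zero by blast
  moreover have "Im (cinner (A x) x) = 0" "Re (cinner (A x) x) \<ge> 0"
    using assms(2) unfolding positive_op_def by simp_all
  ultimately show ?thesis using that by (simp add: complex_eq_iff less_le)
qed

lemma cinner_self_le_onorm_funpow:
  fixes A T :: "'a::complex_inner \<Rightarrow> 'a"
  assumes A: "bounded_linear A" and invariant: "\<And>x y. cinner (A (T x)) (T y) = cinner (A x) y"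
  shows "Re (cinner (A x) x) \<le> onorm A * (norm ((T ^^ k) x))\<^sup>2"
proof -
  have "cinner (A ((T ^^ k) x)) ((T ^^ k) x) = cinner (A x) x"
    by (induction k) (simp_all add: invariant)
  then have "Re (cinner (A x) x) \<le> cmod (cinner (A ((T ^^ k) x)) ((T ^^ k) x))"
    by (simp add: complex_Re_le_cmod)
  also have "\<dots> \<le> norm (A ((T ^^ k) x)) * norm ((T ^^ k) x)" by (rule cinner_cauchy_schwarz)
  also have "\<dots> \<le> onorm A * norm ((T ^^ k) x) * norm ((T ^^ k) x)"
    by (rule mult_right_mono[OF onorm[OF A]]) simp
  finally show ?thesis by (simp add: power2_eq_square algebra_simps)
qed

lemma norm_sq_le_positive_symmetric:
  fixes D :: "'a::real_inner \<Rightarrow> 'a"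
  assumes D: "linear D"
    and symmetric: "\<And>u v. inner (D u) v = inner u (D v)"
    and positive: "\<And>u. 0 \<le> inner (D u) u"
    and bounded: "\<And>u. norm (D u) \<le> C * norm u" and "0 < C"
  shows "(norm (D x))\<^sup>2 \<le> C * inner (D x) x"
proof -
  define d where "d = D x"
  have Dd: "inner (D d) d \<le> C * inner d d"
    using norm_cauchy_schwarz[of "D d" d] mult_right_mono[OF bounded[of d] norm_ge_zero[of d]]
    by (simp add: power2_eq_square algebra_simps flip: power2_norm_eq_inner)
  \<comment> \<open>positivity of the form at x - d / C\<close>
  have "0 \<le> inner (D (x - (1 / C) *\<^sub>R d)) (x - (1 / C) *\<^sub>R d)" by (rule positive)
  then have "0 \<le> inner (D x) x - 2 * (inner d d / C) + inner (D d) d / C\<^sup>2"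
    using symmetric[of d x]
    by (simp add: linear_diff[OF D] linear_scale[OF D] inner_diff_left inner_diff_right
        d_def inner_commute power2_eq_square algebra_simps)
  moreover have "inner (D d) d / C\<^sup>2 \<le> inner d d / C"
    using Dd \<open>0 < C\<close> by (simp add: field_simps power2_eq_square)
  ultimately have "inner d d / C \<le> inner (D x) x" by linarith
  then show ?thesis
    using \<open>0 < C\<close> by (simp add: d_def power2_norm_eq_inner pos_divide_le_eq mult.commute)
qed

section \<open>Banach limits and the L-asymptotic limit\<close>

lemma
  assumes "banach_limit L"
  shows banach_limit_add:
      "bounded (range x) \<Longrightarrow> bounded (range y) \<Longrightarrow> L (\<lambda>n. x n + y n) = L x + L y"
    and banach_limit_mult: "bounded (range x) \<Longrightarrow> L (\<lambda>n. c * x n) = c * L x"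
    and banach_limit_le_SUP: "bounded (range x) \<Longrightarrow> cmod (L x) \<le> (SUP n. cmod (x n))"
    and banach_limit_convergent: "convergent x \<Longrightarrow> L x = lim x"
    and banach_limit_nonneg: "bounded (range x) \<Longrightarrow> (\<And>n. Im (x n) = 0 \<and> Re (x n) \<ge> 0) \<Longrightarrow>
        Im (L x) = 0 \<and> Re (L x) \<ge> 0"
    and banach_limit_shift: "bounded (range x) \<Longrightarrow> L (\<lambda>n. x (Suc n)) = L x"
  using assms unfolding banach_limit_def by metis+

lemma banach_limit_const: "banach_limit L \<Longrightarrow> L (\<lambda>_. c) = c"
  by (simp add: banach_limit_convergent convergent_const)

lemma banach_limit_le:
  assumes "banach_limit L" and "\<And>n. cmod (x n) \<le> C"
  shows "cmod (L x) \<le> C"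
proof -
  have "bounded (range x)" using assms(2) by (auto simp: bounded_iff)
  then have "cmod (L x) \<le> (SUP n. cmod (x n))" by (rule banach_limit_le_SUP[OF assms(1)])
  also have "\<dots> \<le> C" using assms(2) by (rule cSUP_least[OF UNIV_not_empty])
  finally show ?thesis .
qed

lemma banach_limit_mono_real:
  fixes u v :: "nat \<Rightarrow> real"
  assumes L: "banach_limit L" and "bounded (range u)" "bounded (range v)" and "\<And>n. u n \<le> v n"
  shows "Re (L (\<lambda>n. complex_of_real (u n))) \<le> Re (L (\<lambda>n. complex_of_real (v n)))"
proof -
  have bounded: "bounded (range (\<lambda>n. complex_of_real (w n)))" if "bounded (range w)" for w
    using that by (auto simp: bounded_iff)
  have uv: "bounded (range (\<lambda>n. v n - u n))" using assms(3,2) by (rule bounded_minus_comp)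
  have "Re (L (\<lambda>n. complex_of_real (v n - u n))) \<ge> 0"
    by (intro conjunct2[OF banach_limit_nonneg[OF L bounded[OF uv]]]) (simp add: assms(4))
  moreover have "L (\<lambda>n. complex_of_real (v n))
      = L (\<lambda>n. complex_of_real (u n)) + L (\<lambda>n. complex_of_real (v n - u n))"
    by (subst banach_limit_add[OF L bounded[OF assms(2)] bounded[OF uv], symmetric]) simp
  ultimately show ?thesis by simp
qed

lemma power_bounded_norm_le:
  assumes "power_bounded T"
  obtains M where "M \<ge> 0" and "\<And>n x. norm ((T ^^ n) x) \<le> M * norm x"
proof -
  obtain M where M: "\<And>n. onorm (T ^^ n) \<le> M" and T: "bounded_clinear T"
    using assms unfolding power_bounded_def by blast
  have lin: "bounded_linear (T ^^ n)" for n
    by (rule bounded_clinear_imp_bounded_linear[OF bounded_clinear_funpow[OF T]])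
  have "norm ((T ^^ n) x) \<le> M * norm x" for n x
    using onorm[OF lin] M mult_right_mono[OF M norm_ge_zero] order_trans by blast
  moreover have "M \<ge> 0" using M[of 0] onorm_pos_le[OF lin[of 0]] by linarith
  ultimately show ?thesis using that by blast
qed

lemma power_bounded_cinner_funpow_bounded:
  assumes "power_bounded T"
  shows "bounded (range (\<lambda>n. cinner ((T ^^ n) x) ((T ^^ n) y)))"
proof -
  obtain M where "M \<ge> 0" and M: "\<And>n x. norm ((T ^^ n) x) \<le> M * norm x"
    using power_bounded_norm_le[OF assms] by blast
  have "cmod (cinner ((T ^^ n) x) ((T ^^ n) y)) \<le> M * norm x * (M * norm y)" for n
    using cinner_cauchy_schwarz order_trans mult_mono[OF M M] \<open>M \<ge> 0\<close> by fastforce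
  then show ?thesis unfolding bounded_iff by blast
qed

lemma asym_limit_L_characterization:
  fixes T :: "'a::chilbert \<Rightarrow> 'a"
  assumes pb: "power_bounded T" and L: "banach_limit L"
  shows "bounded_clinear (asym_limit_L T L)" and "positive_op (asym_limit_L T L)"
    and "cinner (asym_limit_L T L x) y = L (\<lambda>n. cinner ((T ^^ n) x) ((T ^^ n) y))"
proof -
  have T: "bounded_clinear T" using pb unfolding power_bounded_def by blast
  have Tn: "bounded_linear (T ^^ n)" for n
    by (rule bounded_clinear_imp_bounded_linear[OF bounded_clinear_funpow[OF T]])
  obtain M where "M \<ge> 0" and M: "\<And>n x. norm ((T ^^ n) x) \<le> M * norm x"
    using power_bounded_norm_le[OF pb] by blast
  define B where "B x y = L (\<lambda>n. cinner ((T ^^ n) x) ((T ^^ n) y))" for x y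
  have bounded: "bounded (range (\<lambda>n. cinner ((T ^^ n) x) ((T ^^ n) y)))" for x y
    by (rule power_bounded_cinner_funpow_bounded[OF pb])
  have "\<exists>A. bounded_clinear A \<and> (\<forall>x y. cinner (A x) y = B x y)"
  proof (rule bounded_sesquilinear_form_representation[where K = "M * M"])
    show "cmod (B x y) \<le> M * M * norm x * norm y" for x y
      unfolding B_def using cinner_cauchy_schwarz order_trans mult_mono[OF M M] \<open>M \<ge> 0\<close>
      by (intro banach_limit_le[OF L]) (fastforce simp: algebra_simps)
  qed (simp_all add: B_def \<open>M \<ge> 0\<close> linear_add[OF bounded_linear.linear[OF Tn]]
      bounded_clinear_scaleC[OF bounded_clinear_funpow[OF T]] cinner_add_left cinner_add_right
      cinner_scaleC_left cinner_scaleC_right banach_limit_add[OF L bounded bounded]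
      banach_limit_mult[OF L bounded])
  then obtain A where A: "bounded_clinear A" and AB: "\<And>x y. cinner (A x) y = B x y" by blast
  have "positive_op A"
    unfolding positive_op_def AB B_def
    by (intro allI banach_limit_nonneg[OF L bounded]) (simp add: cinner_self)
  moreover have "asym_limit_L T L = A"
    unfolding asym_limit_L_def
  proof (rule the_equality)
    fix A' assume "bounded_clinear A' \<and> positive_op A' \<and>
      (\<forall>x y. cinner (A' x) y = L (\<lambda>n. cinner ((cadjoint T ^^ n) ((T ^^ n) x)) y))"
    then show "A' = A"
      by (intro ext cinner_left_ext) (simp add: AB B_def cinner_cadjoint_funpow[OF T])
  qed (use A \<open>positive_op A\<close> in \<open>simp add: AB B_def cinner_cadjoint_funpow[OF T]\<close>)
  ultimately show "bounded_clinear (asym_limit_L T L)" "positive_op (asym_limit_L T L)"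
    "cinner (asym_limit_L T L x) y = L (\<lambda>n. cinner ((T ^^ n) x) ((T ^^ n) y))"
    using A by (simp_all add: AB B_def)
qed

theorem onorm_asym_limit_L_ge_one:
  fixes T :: "'a::chilbert \<Rightarrow> 'a"
  assumes pb: "power_bounded T" and L: "banach_limit L" and nonzero: "asym_limit_L T L \<noteq> (\<lambda>_. 0)"
  shows "onorm (asym_limit_L T L) \<ge> 1"
proof -
  define A where "A = asym_limit_L T L"
  note A = asym_limit_L_characterization[OF pb L, folded A_def]
  have bounded: "bounded (range (\<lambda>n. cinner ((T ^^ n) x) ((T ^^ n) y)))" for x y
    by (rule power_bounded_cinner_funpow_bounded[OF pb])
  have invariant: "cinner (A (T x)) (T y) = cinner (A x) y" for x y
    using banach_limit_shift[OF L bounded] by (simp add: A(3) funpow_Suc_right del: funpow.simps)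
  obtain x where pos: "Re (cinner (A x) x) > 0"
    using positive_op_imp_cinner_self_pos A(1,2) nonzero unfolding A_def by blast
  define q where "q = Re (cinner (A x) x)"
  define r where "r k = (norm ((T ^^ k) x))\<^sup>2" for k
  have L_r: "L (\<lambda>k. complex_of_real (r k)) = cinner (A x) x"
    by (simp add: r_def A(3) cinner_self)
  have bounded_r: "bounded (range r)"
    using bounded[of x x] by (simp add: r_def cinner_self bounded_iff norm_power)
  have bounded_of_real_r: "bounded (range (\<lambda>k. complex_of_real (r k)))"
    using bounded[of x x] by (simp add: r_def cinner_self)
  have "Re (L (\<lambda>_. complex_of_real q)) \<le> Re (L (\<lambda>k. complex_of_real (onorm A * r k)))"
    using cinner_self_le_onorm_funpow[OF bounded_clinear_imp_bounded_linear[OF A(1)] invariant]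
    by (intro banach_limit_mono_real[OF L])
      (use bounded_scaleR_comp[OF bounded_r, of "onorm A"] in \<open>simp_all add: q_def r_def\<close>)
  then have "q \<le> onorm A * q"
    using banach_limit_mult[OF L, of "\<lambda>k. complex_of_real (r k)" "complex_of_real (onorm A)"]
    by (simp add: banach_limit_const[OF L] bounded_of_real_r L_r q_def)
  then show ?thesis using pos unfolding A_def q_def by simp
qed

section \<open>Contractions\<close>

lemma contraction_norm_funpow_mono:
  assumes "contraction T" and "m \<le> n"
  shows "norm ((T ^^ n) x) \<le> norm ((T ^^ m) x)"
proof -
  have T: "bounded_clinear T" and "onorm T \<le> 1" using assms(1) unfolding contraction_def by blast+
  have step: "norm (T u) \<le> norm u" for u
    using onorm[OF bounded_clinear_imp_bounded_linear[OF T], of u]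
      mult_right_mono[OF \<open>onorm T \<le> 1\<close> norm_ge_zero[of u]] by linarith
  have "norm ((T ^^ (k + m)) x) \<le> norm ((T ^^ m) x)" for k
  proof (induction k)
    case (Suc k)
    have "norm ((T ^^ (Suc k + m)) x) \<le> norm ((T ^^ (k + m)) x)" using step by simp
    then show ?case using Suc by linarith
  qed simp
  moreover obtain k where "n = k + m" using assms(2) le_iff_add by (metis add.commute)
  ultimately show ?thesis by simp
qed

lemma contraction_gram_funpow:
  fixes T :: "'a::chilbert \<Rightarrow> 'a"
  assumes "contraction T"
  defines "P n u \<equiv> (cadjoint T ^^ n) ((T ^^ n) u)"
  shows "bounded_linear (P n)"
    and "cinner (P n u) v = cinner ((T ^^ n) u) ((T ^^ n) v)"
    and "norm (P n u) \<le> norm u"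
proof -
  have T: "bounded_clinear T" using assms(1) unfolding contraction_def by blast
  have "bounded_linear (cadjoint T ^^ n)" "bounded_linear (T ^^ n)"
    using bounded_clinear_funpow bounded_clinear_cadjoint[OF T] T
    by (blast intro: bounded_clinear_imp_bounded_linear)+
  then show "bounded_linear (P n)" unfolding P_def by (rule bounded_linear_compose)
  show cinner_P: "cinner (P n u) v = cinner ((T ^^ n) u) ((T ^^ n) v)" for u v
    unfolding P_def by (rule cinner_cadjoint_funpow[OF T])
  have "cmod (cinner (P n u) v) \<le> norm u * norm v" for v
  proof -
    have "cmod (cinner (P n u) v) \<le> norm ((T ^^ n) u) * norm ((T ^^ n) v)"
      unfolding cinner_P by (rule cinner_cauchy_schwarz)
    also have "\<dots> \<le> norm u * norm v"
      using contraction_norm_funpow_mono[OF assms(1), of 0] by (intro mult_mono) auto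
    finally show ?thesis .
  qed
  then show "norm (P n u) \<le> norm u" by (intro norm_le_if_cinner_le) simp_all
qed

lemma contraction_gram_funpow_dist:
  fixes T :: "'a::chilbert \<Rightarrow> 'a"
  assumes T: "contraction T" and "m \<le> n"
  defines "P k u \<equiv> (cadjoint T ^^ k) ((T ^^ k) u)"
  shows "(norm (P m x - P n x))\<^sup>2 \<le> 2 * ((norm ((T ^^ m) x))\<^sup>2 - (norm ((T ^^ n) x))\<^sup>2)"
proof -
  note P = contraction_gram_funpow[OF T, folded P_def]
  have inner_P: "inner (P k u) v = Re (cinner ((T ^^ k) u) ((T ^^ k) v))" for k u v
    by (simp add: inner_cinner P(2))
  have Re_cinner_commute: "Re (cinner a b) = Re (cinner b a)" for a b :: 'a
    by (subst cinner_commute) simp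
  have "(norm (P m x - P n x))\<^sup>2 \<le> 2 * inner (P m x - P n x) x"
  proof (rule norm_sq_le_positive_symmetric[where D = "\<lambda>u. P m u - P n u"])
    show "linear (\<lambda>u. P m u - P n u)"
      by (intro bounded_linear.linear bounded_linear_sub P(1))
    show "inner (P m u - P n u) v = inner u (P m v - P n v)" for u v
      by (simp add: inner_diff_left inner_diff_right inner_P inner_commute[of u] Re_cinner_commute)
    show "0 \<le> inner (P m u - P n u) u" for u
      using power_mono[OF contraction_norm_funpow_mono[OF T \<open>m \<le> n\<close>, of u] norm_ge_zero, of 2]
      by (simp add: inner_diff_left inner_P cinner_self)
    show "norm (P m u - P n u) \<le> 2 * norm u" for u
      using norm_triangle_ineq4[of "P m u" "P n u"] P(3)[of m u] P(3)[of n u] by linarith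
  qed simp
  then show ?thesis by (simp add: inner_diff_left inner_P cinner_self)
qed

lemma tendsto_cinner_left:
  fixes X :: "nat \<Rightarrow> 'a::complex_inner"
  assumes "X \<longlonglongrightarrow> a"
  shows "(\<lambda>n. cinner (X n) y) \<longlonglongrightarrow> cinner a y"
proof -
  have "bounded_linear (\<lambda>u. cinner u y)"
  proof (rule bounded_linear_intro[where K = "norm y"])
    show "cinner (r *\<^sub>R u) y = r *\<^sub>R cinner u y" for r u
      by (metis cinner_scaleC_left scaleC_of_real scaleR_conv_of_real)
  qed (simp_all add: cinner_add_left cinner_cauchy_schwarz)
  then show ?thesis by (rule bounded_linear.tendsto[OF _ assms])
qed

lemma contraction_tendsto_asym_limit:
  fixes T :: "'a::chilbert \<Rightarrow> 'a"
  assumes T: "contraction T"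
  shows "(\<lambda>n. (cadjoint T ^^ n) ((T ^^ n) x)) \<longlonglongrightarrow> asym_limit T x"
proof -
  define P where "P n u = (cadjoint T ^^ n) ((T ^^ n) u)" for n u
  have "convergent (\<lambda>n. P n x)" for x
  proof -
    define r where "r n = (norm ((T ^^ n) x))\<^sup>2" for n
    have "decseq r"
      unfolding r_def decseq_def using contraction_norm_funpow_mono[OF T] by (simp add: power_mono)
    then obtain l where "r \<longlonglongrightarrow> l" and l_le: "\<And>n. l \<le> r n"
      using decseq_convergent[of r 0] by (auto simp: r_def)
    have "(dist (P m x) (P n x))\<^sup>2 \<le> 2 * (r m - l) + 2 * (r n - l)" for m n
    proof (cases "m \<le> n")
      case True
      then show ?thesis
        using contraction_gram_funpow_dist[OF T True, of x] l_le[of n]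
        by (simp add: P_def r_def dist_norm)
    next
      case False
      then show ?thesis
        using contraction_gram_funpow_dist[OF T, of n m x] l_le[of m]
        by (simp add: P_def r_def dist_norm norm_minus_commute)
    qed
    moreover have "(\<lambda>n. 2 * (r n - l)) \<longlonglongrightarrow> 0"
      using tendsto_mult_right_zero[OF LIM_zero[OF \<open>r \<longlonglongrightarrow> l\<close>]] .
    ultimately have "Cauchy (\<lambda>n. P n x)"
      by (intro Cauchy_if_dist_sq_le_add[where e = "\<lambda>n. 2 * (r n - l)"])
    then show ?thesis by (simp add: Cauchy_convergent_iff)
  qed
  then obtain A where A: "\<And>x. (\<lambda>n. P n x) \<longlonglongrightarrow> A x" unfolding convergent_def by metis
  have "asym_limit T = A"
    unfolding asym_limit_def
  proof (rule the_equality)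
    fix A' assume "\<forall>x. (\<lambda>n. (cadjoint T ^^ n) ((T ^^ n) x)) \<longlonglongrightarrow> A' x"
    then show "A' = A" using A unfolding P_def by (blast intro: LIMSEQ_unique)
  qed (use A in \<open>simp add: P_def\<close>)
  then show ?thesis using A by (simp add: P_def)
qed

lemma contraction_asym_limit:
  fixes T :: "'a::chilbert \<Rightarrow> 'a"
  assumes T: "contraction T"
  shows "bounded_clinear (asym_limit T)" and "onorm (asym_limit T) \<le> 1"
    and "positive_op (asym_limit T)"
    and "cinner (asym_limit T (T x)) (T y) = cinner (asym_limit T x) y"
    and "(\<lambda>n. (norm ((T ^^ n) x))\<^sup>2) \<longlonglongrightarrow> Re (cinner (asym_limit T x) x)"
proof -
  define A where "A = asym_limit T"
  have lim: "(\<lambda>n. cinner ((T ^^ n) x) ((T ^^ n) y)) \<longlonglongrightarrow> cinner (A x) y" for x y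
    using tendsto_cinner_left[OF contraction_tendsto_asym_limit[OF T, of x], of y]
    by (simp add: A_def contraction_gram_funpow(2)[OF T])
  have Tn: "bounded_clinear (T ^^ n)" for n
    using T bounded_clinear_funpow unfolding contraction_def by blast
  have add: "A (u + v) = A u + A v" for u v
  proof (rule cinner_left_ext)
    fix y
    have "(\<lambda>n. cinner ((T ^^ n) (u + v)) ((T ^^ n) y)) \<longlonglongrightarrow> cinner (A u) y + cinner (A v) y"
      using tendsto_add[OF lim lim] Tn[THEN bounded_clinear_imp_bounded_linear]
      by (simp add: linear_simps cinner_add_left)
    then show "cinner (A (u + v)) y = cinner (A u + A v) y"
      using lim LIMSEQ_unique by (metis cinner_add_left)
  qed
  have scale: "A (scaleC c u) = scaleC c (A u)" for c u
  proof (rule cinner_left_ext)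
    fix y
    have "(\<lambda>n. cinner ((T ^^ n) (scaleC c u)) ((T ^^ n) y)) \<longlonglongrightarrow> c * cinner (A u) y"
      using tendsto_mult_left[OF lim]
      by (simp add: bounded_clinear_scaleC[OF Tn] cinner_scaleC_left)
    then show "cinner (A (scaleC c u)) y = cinner (scaleC c (A u)) y"
      using lim LIMSEQ_unique by (metis cinner_scaleC_left)
  qed
  have "norm (A x) \<le> norm x" for x
    using contraction_tendsto_asym_limit[OF T, of x] contraction_gram_funpow(3)[OF T]
    by (intro LIMSEQ_le_const2[OF tendsto_norm]) (auto simp: A_def)
  then have "bounded_linear A"
    using scale[where c = "complex_of_real r" for r]
    by (intro bounded_linear_intro[of _ 1]) (simp_all add: add scaleC_of_real)
  then show "bounded_clinear A" "onorm A \<le> 1"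
    using scale \<open>\<And>x. norm (A x) \<le> norm x\<close> by (auto simp: bounded_clinear_def intro: onorm_bound)
  show norm_sq: "(\<lambda>n. (norm ((T ^^ n) x))\<^sup>2) \<longlonglongrightarrow> Re (cinner (A x) x)" for x
    using tendsto_Re[OF lim[of x x]] by (simp add: cinner_self)
  have "(\<lambda>n. 0) \<longlonglongrightarrow> Im (cinner (A x) x)" for x
    using tendsto_Im[OF lim[of x x]] by (simp add: cinner_self)
  then have "Im (cinner (A x) x) = 0" for x by (simp add: LIMSEQ_const_iff)
  moreover have "Re (cinner (A x) x) \<ge> 0" for x by (rule LIMSEQ_le_const[OF norm_sq]) simp
  ultimately show "positive_op A" unfolding positive_op_def by simp
  \<comment> \<open>the limit forgets the first step\<close>
  show "cinner (A (T x)) (T y) = cinner (A x) y"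
    using LIMSEQ_Suc[OF lim[of x y]] lim[of "T x" "T y"] LIMSEQ_unique
    by (simp add: funpow_Suc_right del: funpow.simps)
qed

theorem onorm_asym_limit_eq_one:
  fixes T :: "'a::chilbert \<Rightarrow> 'a"
  assumes T: "contraction T" and nonzero: "asym_limit T \<noteq> (\<lambda>_. 0)"
  shows "onorm (asym_limit T) = 1"
proof -
  define A where "A = asym_limit T"
  note A = contraction_asym_limit[OF T, folded A_def]
  obtain x where pos: "Re (cinner (A x) x) > 0"
    using positive_op_imp_cinner_self_pos A(1,3) nonzero unfolding A_def by blast
  have "Re (cinner (A x) x) \<le> onorm A * Re (cinner (A x) x)"
    using cinner_self_le_onorm_funpow[OF bounded_clinear_imp_bounded_linear[OF A(1)] A(4)]
    by (intro LIMSEQ_le_const[OF tendsto_mult_left[OF A(5)]]) auto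
  then show ?thesis using pos A(2) unfolding A_def by simp
qed

theorem mainTheorem1:
  fixes T :: "'a::chilbert \<Rightarrow> 'a"
    and L :: "(nat \<Rightarrow> complex) \<Rightarrow> complex"
  shows "(power_bounded T \<and> banach_limit L \<and> asym_limit_L T L \<noteq> (\<lambda>_. 0)
            \<longrightarrow> onorm (asym_limit_L T L) \<ge> 1)
       \<and> (contraction T \<and> asym_limit T \<noteq> (\<lambda>_. 0) \<longrightarrow> onorm (asym_limit T) = 1)"
  using onorm_asym_limit_L_ge_one onorm_asym_limit_eq_one by blast

end
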